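(* For every integer $n>1$ and every integer $k$ with $1\le k\le 2n$, $c_{2k,n}=2^{k+1}-1$.
   Context: Fix $n>1$. Let $Q_n=\{(1,n+1)\}\cup\{(m,2n+2-m):2\le m\le n\}\cup\{(m,2n+1-m):n+1\le m\le 2n\}$. For integers $1\le i,j\le 2n$ and $k\ge1$ define $b_{k,i,j,n}$ recursively by $b_{1,i,j,n}=1$ if $(i,j)\in Q_n$ and $0$ otherwise, and $b_{k+1,i,j,n}=b_{k,i,2n+1-j,n}+b_{k,i,n+1,n}$ if $1\le j\le n-1$; $b_{k+1,i,n,n}=b_{k,i,n,n}+b_{k,i,n+1,n}$; $b_{k+1,i,n+1,n}=b_{k,i,1,n}$; $b_{k+1,i,j,n}=b_{k,i,2n+2-j,n}$ if $n+2\le j\le 2n$. Define $c_{k,n}=\sum_{i=1}^{2n}b_{k,i,i,n}+b_{k,n+1,n,n}+\sum_{i=n+2}^{2n}b_{k,i,n+1,n}$. *)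

theory Defs
  imports Main
begin

definition Q :: "nat \<Rightarrow> (nat \<times> nat) set" where
  "Q n = {(1, n + 1)} \<union> {(m, 2*n + 2 - m) | m. 2 \<le> m \<and> m \<le> n}
         \<union> {(m, 2*n + 1 - m) | m. n + 1 \<le> m \<and> m \<le> 2*n}"

text \<open>b k i j n is the paper's b_{k,i,j,n} for k \<ge> 1 (the value at k = 0 is an unused dummy).\<close>
fun b :: "nat \<Rightarrow> nat \<Rightarrow> nat \<Rightarrow> nat \<Rightarrow> nat" where
  "b 0 i j n = 0"
| "b (Suc 0) i j n = (if (i, j) \<in> Q n then 1 else 0)"
| "b (Suc (Suc k)) i j n =
     (if 1 \<le> j \<and> j \<le> n - 1 then b (Suc k) i (2*n + 1 - j) n + b (Suc k) i (n + 1) n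
      else if j = n then b (Suc k) i n n + b (Suc k) i (n + 1) n
      else if j = n + 1 then b (Suc k) i 1 n
      else if n + 2 \<le> j \<and> j \<le> 2*n then b (Suc k) i (2*n + 2 - j) n
      else 0)"

definition c :: "nat \<Rightarrow> nat \<Rightarrow> nat" where
  "c k n = (\<Sum>i = 1..2*n. b k i i n) + b k (n + 1) n n + (\<Sum>i = n + 2..2*n. b k i (n + 1) n)"

end

theory Submission
  imports Defs
begin

(* For fixed i, the recursion defining b_{k,i,j,n} is the first-step recursion for counting walks
   in a digraph G_n on {1..2n}: b_{k+1,i,j,n} is the number of walks of length k from j to the
   partner of i under the permutation Q_n.  Reindexing the defining sum of c over the edges of G_n
   then shows that c_{k,n} is the number of closed walks of length k in G_n, i.e. the trace of the
   k-th power of its adjacency matrix.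

   G_n is a path from the hub n+1 through 1, 2n, 2, 2n-1, ..., n-1, n+2 to the vertex n, with a loop
   at n and an edge back to the hub from each of 1, ..., n. *)

(* walks E V m u v counts the walks u = w0, w1, ..., wm = v of length m in the digraph E
   whose vertices w1, ..., wm lie in V, by recursion on the first step; for a relation E on a
   finite set V it is the (u, v) entry of the m-th power of the adjacency matrix. *)
fun walks :: "('a \<Rightarrow> 'a \<Rightarrow> bool) \<Rightarrow> 'a set \<Rightarrow> nat \<Rightarrow> 'a \<Rightarrow> 'a \<Rightarrow> nat" where
  "walks E V 0 u v = (if u = v then 1 else 0)"
| "walks E V (Suc m) u v = (\<Sum>s\<in>{s\<in>V. E u s}. walks E V m s v)"

declare walks.simps(2) [simp del]

(* Decomposition of a walk by its last step instead of its first one (associativity of the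
   matrix product); needed to follow walks backwards from their end vertex. *)
lemma walks_Suc_last:
  assumes "finite V" "u \<in> V" "v \<in> V"
  shows "walks E V (Suc m) u v = (\<Sum>s\<in>{s\<in>V. E s v}. walks E V m u s)"
  using assms(2,3)
proof (induction m arbitrary: u)
  case 0
  then show ?case using assms(1) by (simp add: walks.simps(2) sum.If_cases Int_def conj_commute)
next
  case (Suc m)
  have "walks E V (Suc (Suc m)) u v = (\<Sum>s\<in>{s\<in>V. E u s}. walks E V (Suc m) s v)"
    by (rule walks.simps(2))
  also have "\<dots> = (\<Sum>s\<in>{s\<in>V. E u s}. \<Sum>p\<in>{p\<in>V. E p v}. walks E V m s p)"
    using Suc.IH Suc.prems by (intro sum.cong) auto
  also have "\<dots> = (\<Sum>p\<in>{p\<in>V. E p v}. \<Sum>s\<in>{s\<in>V. E u s}. walks E V m s p)"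
    by (rule sum.swap)
  also have "\<dots> = (\<Sum>p\<in>{p\<in>V. E p v}. walks E V (Suc m) u p)"
    by (simp add: walks.simps(2))
  finally show ?case .
qed

(* The digraph G_n on {1..2n} encoded by the recursion for b: j -> s iff b_{k+1,i,j,n} has the
   summand b_{k,i,s,n}.  With x_j = j and y_j = 2n+1-j it is the path
   n+1 -> x_1 -> y_1 -> x_2 -> ... -> y_{n-1} -> x_n = n, a loop at n, and an edge from every x_j
   (1 <= j <= n) back to the hub n+1. *)
definition edge :: "nat \<Rightarrow> nat \<Rightarrow> nat \<Rightarrow> bool" where
  "edge n u s \<longleftrightarrow>
     (1 \<le> u \<and> u \<le> n - 1 \<and> (s = 2*n + 1 - u \<or> s = n + 1))
   \<or> (u = n \<and> (s = n \<or> s = n + 1))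
   \<or> (u = n + 1 \<and> s = 1)
   \<or> (n + 2 \<le> u \<and> u \<le> 2*n \<and> s = 2*n + 2 - u)"

lemma walks_Suc_first_single:
  "{s \<in> V. E u s} = {a} \<Longrightarrow> walks E V (Suc m) u v = walks E V m a v"
  by (simp add: walks.simps(2))

lemma walks_Suc_first_pair:
  "{s \<in> V. E u s} = {a, a'} \<Longrightarrow> a \<noteq> a' \<Longrightarrow> walks E V (Suc m) u v = walks E V m a v + walks E V m a' v"
  by (simp add: walks.simps(2))

lemma walks_Suc_last_single:
  "finite V \<Longrightarrow> u \<in> V \<Longrightarrow> v \<in> V \<Longrightarrow> {s \<in> V. E s v} = {a} \<Longrightarrow> walks E V (Suc m) u v = walks E V m u a"
  by (simp add: walks_Suc_last)

lemma walks_Suc_last_pair: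
  "finite V \<Longrightarrow> u \<in> V \<Longrightarrow> v \<in> V \<Longrightarrow> {s \<in> V. E s v} = {a, a'} \<Longrightarrow> a \<noteq> a'
   \<Longrightarrow> walks E V (Suc m) u v = walks E V m u a + walks E V m u a'"
  by (simp add: walks_Suc_last)

lemma out_low: "1 \<le> u \<Longrightarrow> u \<le> n - 1 \<Longrightarrow> {s \<in> {1..2*n}. edge n u s} = {2*n + 1 - u, n + 1}"
  unfolding edge_def by auto

lemma out_end: "n > 1 \<Longrightarrow> {s \<in> {1..2*n}. edge n n s} = {n, n + 1}"
  unfolding edge_def by auto

lemma out_hub: "n > 1 \<Longrightarrow> {s \<in> {1..2*n}. edge n (n + 1) s} = {1}"
  unfolding edge_def by auto

lemma out_high: "n + 2 \<le> u \<Longrightarrow> u \<le> 2*n \<Longrightarrow> {s \<in> {1..2*n}. edge n u s} = {2*n + 2 - u}"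
  unfolding edge_def by auto

lemma out_outside: "u \<notin> {1..2*n} \<Longrightarrow> {s \<in> {1..2*n}. edge n u s} = {}"
  unfolding edge_def by auto

lemma in_one: "n > 1 \<Longrightarrow> {s \<in> {1..2*n}. edge n s 1} = {n + 1}"
  unfolding edge_def by auto

lemma in_low: "2 \<le> v \<Longrightarrow> v \<le> n - 1 \<Longrightarrow> {s \<in> {1..2*n}. edge n s v} = {2*n + 2 - v}"
  unfolding edge_def by auto

lemma in_end: "n > 1 \<Longrightarrow> {s \<in> {1..2*n}. edge n s n} = {n + 2, n}"
  unfolding edge_def by auto

lemma in_high: "n + 2 \<le> v \<Longrightarrow> v \<le> 2*n \<Longrightarrow> {s \<in> {1..2*n}. edge n s v} = {2*n + 1 - v}"
  unfolding edge_def by auto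

abbreviation gwalks :: "nat \<Rightarrow> nat \<Rightarrow> nat \<Rightarrow> nat \<Rightarrow> nat" where
  "gwalks n \<equiv> walks (edge n) {1..2*n}"

lemma walks_first_low:
  "n > 1 \<Longrightarrow> 1 \<le> u \<Longrightarrow> u \<le> n - 1 \<Longrightarrow> gwalks n (Suc m) u v = gwalks n m (2*n + 1 - u) v + gwalks n m (n + 1) v"
  using out_low by (intro walks_Suc_first_pair) auto

lemma walks_first_end: "n > 1 \<Longrightarrow> gwalks n (Suc m) n v = gwalks n m n v + gwalks n m (n + 1) v"
  using out_end by (intro walks_Suc_first_pair) auto

lemma walks_first_hub: "n > 1 \<Longrightarrow> gwalks n (Suc m) (n + 1) v = gwalks n m 1 v"
  using out_hub by (intro walks_Suc_first_single) auto

lemma walks_first_high: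
  "n > 1 \<Longrightarrow> n + 2 \<le> u \<Longrightarrow> u \<le> 2*n \<Longrightarrow> gwalks n (Suc m) u v = gwalks n m (2*n + 2 - u) v"
  using out_high by (intro walks_Suc_first_single) auto

(* Two steps from a low vertex x_j: through y_j to x_{j+1}, or through the hub. *)
lemma walks_first_low_two:
  assumes "n > 1" "1 \<le> j" "j \<le> n - 1"
  shows "gwalks n (Suc (Suc t)) j v = gwalks n t (j + 1) v + gwalks n (Suc t) (n + 1) v"
  using walks_first_low[OF assms, of "Suc t" v] walks_first_high[OF assms(1), of "2*n + 1 - j" t v] assms
  by (simp add: Suc_diff_le)

(* The first-step recursion in the exact shape of the defining recursion of b. *)
lemma walks_first_step:
  assumes "n > 1"
  shows "gwalks n (Suc m) u v =
    (if 1 \<le> u \<and> u \<le> n - 1 then gwalks n m (2*n + 1 - u) v + gwalks n m (n + 1) v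
     else if u = n then gwalks n m n v + gwalks n m (n + 1) v
     else if u = n + 1 then gwalks n m 1 v
     else if n + 2 \<le> u \<and> u \<le> 2*n then gwalks n m (2*n + 2 - u) v
     else 0)"
proof -
  have "gwalks n (Suc m) u v = 0" if "u \<notin> {1..2*n}"
    by (simp only: walks.simps(2) out_outside[OF that]) simp
  then show ?thesis
    using assms walks_first_low[of n u m v] walks_first_end[of n m v] walks_first_hub[of n m v]
      walks_first_high[of n u m v]
    by auto
qed

lemma walks_last_one: "n > 1 \<Longrightarrow> u \<in> {1..2*n} \<Longrightarrow> gwalks n (Suc m) u 1 = gwalks n m u (n + 1)"
  using in_one by (intro walks_Suc_last_single) auto

lemma walks_last_low:
  "n > 1 \<Longrightarrow> 2 \<le> v \<Longrightarrow> v \<le> n - 1 \<Longrightarrow> u \<in> {1..2*n} \<Longrightarrow> gwalks n (Suc m) u v = gwalks n m u (2*n + 2 - v)"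
  using in_low by (intro walks_Suc_last_single) auto

lemma walks_last_end: "n > 1 \<Longrightarrow> u \<in> {1..2*n} \<Longrightarrow> gwalks n (Suc m) u n = gwalks n m u (n + 2) + gwalks n m u n"
  using in_end by (intro walks_Suc_last_pair) auto

lemma walks_last_high:
  "n > 1 \<Longrightarrow> n + 2 \<le> v \<Longrightarrow> v \<le> 2*n \<Longrightarrow> u \<in> {1..2*n} \<Longrightarrow>
   gwalks n (Suc m) u v = gwalks n m u (2*n + 1 - v)"
  using in_high by (intro walks_Suc_last_single) auto

definition Q_partner :: "nat \<Rightarrow> nat \<Rightarrow> nat" where
  "Q_partner n i = (if i = 1 then n + 1 else if i \<le> n then 2*n + 2 - i else 2*n + 1 - i)"

lemma Q_iff: "n > 1 \<Longrightarrow> (i, j) \<in> Q n \<longleftrightarrow> i \<in> {1..2*n} \<and> j = Q_partner n i"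
  unfolding Q_def Q_partner_def by auto

lemma b_eq_walks:
  assumes "n > 1" "i \<in> {1..2*n}"
  shows "b (Suc m) i j n = gwalks n m j (Q_partner n i)"
proof (induction m arbitrary: j)
  case 0
  then show ?case using Q_iff[OF assms(1), of i j] assms(2) by auto
next
  case (Suc m)
  then show ?case by (simp only: b.simps walks_first_step[OF assms(1)])
qed

definition c_positions :: "nat \<Rightarrow> (nat \<times> nat) set" where
  "c_positions n = {(i, j). (i = j \<and> 1 \<le> i \<and> i \<le> 2*n) \<or> (i = n + 1 \<and> j = n) \<or> (n + 2 \<le> i \<and> i \<le> 2*n \<and> j = n + 1)}"

lemma c_as_sum: "c k n = (\<Sum>(i, j)\<in>c_positions n. b k i j n)"
proof -
  let ?D = "(\<lambda>i. (i, i)) ` {1..2*n}" and ?R = "(\<lambda>i. (i, n + 1)) ` {n + 2..2*n}"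
  have split: "c_positions n = insert (n + 1, n) (?D \<union> ?R)"
    unfolding c_positions_def by auto
  have "(\<Sum>(i, j)\<in>c_positions n. b k i j n) = b k (n + 1) n n + (\<Sum>(i, j)\<in>?D \<union> ?R. b k i j n)"
    unfolding split by (subst sum.insert) auto
  also have "(\<Sum>(i, j)\<in>?D \<union> ?R. b k i j n) = (\<Sum>(i, j)\<in>?D. b k i j n) + (\<Sum>(i, j)\<in>?R. b k i j n)"
    by (rule sum.union_disjoint) auto
  also have "\<dots> = (\<Sum>i = 1..2*n. b k i i n) + (\<Sum>i = n + 2..2*n. b k i (n + 1) n)"
    by (subst (1 2) sum.reindex) (auto simp: inj_on_def)
  finally show ?thesis unfolding c_def by simp
qed

(* Q_partner_inv is the inverse permutation; (i, j) |-> (Q_partner n i, j) maps the positions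
   of c bijectively onto the edges of G_n. *)
definition Q_partner_inv :: "nat \<Rightarrow> nat \<Rightarrow> nat" where
  "Q_partner_inv n u = (if u \<le> n then 2*n + 1 - u else if u = n + 1 then 1 else 2*n + 2 - u)"

lemma Q_partner_inv_Q_partner: "i \<in> {1..2*n} \<Longrightarrow> Q_partner_inv n (Q_partner n i) = i"
  unfolding Q_partner_def Q_partner_inv_def by auto

lemma Q_partner_Q_partner_inv: "n > 1 \<Longrightarrow> u \<in> {1..2*n} \<Longrightarrow> Q_partner n (Q_partner_inv n u) = u"
  unfolding Q_partner_def Q_partner_inv_def by auto

lemma Q_partner_position_edge:
  assumes "n > 1" "(i, j) \<in> c_positions n"
  shows "(Q_partner n i, j) \<in> Sigma {1..2*n} (\<lambda>u. {s \<in> {1..2*n}. edge n u s})"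
  using assms unfolding c_positions_def Q_partner_def edge_def by auto

lemma edge_Q_partner_inv_position:
  assumes "n > 1" "(u, s) \<in> Sigma {1..2*n} (\<lambda>u. {s \<in> {1..2*n}. edge n u s})"
  shows "(Q_partner_inv n u, s) \<in> c_positions n"
  using assms unfolding c_positions_def Q_partner_inv_def edge_def by auto

(* c_{k+1,n} is the number of closed walks of length k+1 in G_n: each term of c is the number of
   walks of length k closing up along one edge, and every edge occurs exactly once. *)
lemma c_eq_trace:
  assumes "n > 1"
  shows "c (Suc m) n = (\<Sum>u\<in>{1..2*n}. gwalks n (Suc m) u u)"
proof -
  let ?E = "Sigma {1..2*n} (\<lambda>u. {s \<in> {1..2*n}. edge n u s})"
  have "c (Suc m) n = (\<Sum>(i, j)\<in>c_positions n. gwalks n m j (Q_partner n i))"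
    unfolding c_as_sum using assms by (intro sum.cong) (auto simp: c_positions_def b_eq_walks)
  also have "\<dots> = (\<Sum>(u, s)\<in>?E. gwalks n m s u)"
  proof (rule sum.reindex_bij_witness[where i = "\<lambda>(u, s). (Q_partner_inv n u, s)" and j = "\<lambda>(i, j). (Q_partner n i, j)"])
    fix p assume "p \<in> c_positions n"
    then show "(case (case p of (i, j) \<Rightarrow> (Q_partner n i, j)) of (u, s) \<Rightarrow> (Q_partner_inv n u, s)) = p"
      using assms unfolding c_positions_def by (auto simp: Q_partner_inv_Q_partner)
  qed (use assms Q_partner_position_edge edge_Q_partner_inv_position Q_partner_Q_partner_inv in auto)
  also have "\<dots> = (\<Sum>u\<in>{1..2*n}. gwalks n (Suc m) u u)"
    by (simp add: sum.Sigma[symmetric] walks.simps(2))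
  finally show ?thesis .
qed

(* compositions s = number of compositions of s (1 for s = 0, 2^(s-1) otherwise). *)
definition compositions :: "nat \<Rightarrow> nat" where
  "compositions s = (if s = 0 then 1 else 2 ^ (s - 1))"

(* geom k j = 2^(k-j), truncated to 0 beyond j = k; the closed walk counts at low and high
   vertices have this form. *)
definition geom :: "nat \<Rightarrow> nat \<Rightarrow> nat" where
  "geom k j = (if j \<le> k then 2 ^ (k - j) else 0)"

lemma geom_Suc_Suc: "geom (Suc k) (Suc j) = geom k j"
  unfolding geom_def by simp

lemma geom_step: "geom k j = geom k (Suc j) + (if j \<le> k then compositions (k - j) else 0)"
proof (cases "j < k")
  case True
  then have "k - j = Suc (k - Suc j)" by simp
  then show ?thesis using True unfolding geom_def compositions_def by simp
qed (auto simp: geom_def compositions_def)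

lemma pow_plus_geom: "2 ^ (k - j) + geom k j = 2 ^ (Suc k - j)"
  unfolding geom_def by (simp add: Suc_diff_le)

lemma geom_partial_sum: "(\<Sum>j = 1..m. geom k j) + 2 ^ (k - m) = 2 ^ k"
proof (induction m)
  case (Suc m)
  have "geom k (Suc m) + 2 ^ (k - Suc m) = 2 ^ (k - m)"
  proof (cases "Suc m \<le> k")
    case True
    then have "k - m = Suc (k - Suc m)" by simp
    then show ?thesis using True unfolding geom_def by simp
  qed (simp add: geom_def)
  then show ?case using Suc.IH by (simp add: add.assoc)
qed simp

(* Invariant for the simultaneous computation of walks into the hub.  The first returns to the
   hub have the lengths 2, 4, ..., 2n-2 and every length >= 2n, each exactly once; hence below
   length 4n+2 the closed walks of length 2s at the hub correspond to the compositions of s, and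
   there are none of odd length below 2n. *)
definition hub_counts :: "nat \<Rightarrow> nat \<Rightarrow> bool" where
  "hub_counts n s \<longleftrightarrow>
     (s \<le> 2*n \<longrightarrow> gwalks n (2*s) (n + 1) (n + 1) = compositions s)
   \<and> (2*s + 1 < 2*n \<longrightarrow> gwalks n (2*s + 1) (n + 1) (n + 1) = 0)
   \<and> (\<forall>j. 1 \<le> j \<and> j \<le> n \<and> 2*s + 1 + 2*j \<le> 4*n + 1 \<longrightarrow> gwalks n (2*s + 1) j (n + 1) = 2 ^ s)
   \<and> (\<forall>j. 1 \<le> j \<and> j \<le> n \<and> s + j \<le> n \<longrightarrow> gwalks n (2*s) j (n + 1) = 0)
   \<and> (1 \<le> s \<and> s \<le> n \<longrightarrow> gwalks n (2*s) n (n + 1) = 2 ^ (s - 1))"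

lemma hub_counts_0:
  assumes n: "n > 1"
  shows "hub_counts n 0"
proof -
  have "gwalks n 1 (n + 1) (n + 1) = 0"
    using walks_first_hub[OF n, of 0 "n + 1"] n by simp
  moreover have "gwalks n 1 j (n + 1) = 1" if "1 \<le> j" "j \<le> n" for j
  proof (cases "j = n")
    case True
    then show ?thesis using walks_first_end[OF n, of 0 "n + 1"] by simp
  next
    case False
    then show ?thesis using walks_first_low[OF n, of j 0 "n + 1"] that n by simp
  qed
  ultimately show ?thesis unfolding hub_counts_def by (auto simp: compositions_def)
qed

lemma hub_counts_Suc:
  assumes n: "n > 1" and IH: "hub_counts n s"
  shows "hub_counts n (Suc s)"
proof -
  have odd_hub: "gwalks n (2*s + 1) (n + 1) (n + 1) = 0" if "2*s + 1 < 2*n"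
    using IH that unfolding hub_counts_def by blast
  have odd_to_hub: "gwalks n (2*s + 1) j (n + 1) = 2 ^ s" if "1 \<le> j" "j \<le> n" "2*s + 1 + 2*j \<le> 4*n + 1" for j
    using IH that unfolding hub_counts_def by blast
  have even_to_hub: "gwalks n (2*s) j (n + 1) = 0" if "1 \<le> j" "j \<le> n" "s + j \<le> n" for j
    using IH that unfolding hub_counts_def by blast
  have even_hub': "gwalks n (2*Suc s) (n + 1) (n + 1) = compositions (Suc s)" if "Suc s \<le> 2*n"
    using walks_first_hub[OF n, of "2*s + 1" "n + 1"] odd_to_hub[of 1] that n
    by (simp add: compositions_def)
  have even_to_hub': "gwalks n (2*Suc s) j (n + 1) = 0" if "1 \<le> j" "j \<le> n" "Suc s + j \<le> n" for j
    using walks_first_low_two[OF n, of j "2*s" "n + 1"] even_to_hub[of "j + 1"] odd_hub that by simp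
  have end_to_hub': "gwalks n (2*Suc s) n (n + 1) = 2 ^ s" if "Suc s \<le> n"
    using walks_first_end[OF n, of "2*s + 1" "n + 1"] odd_to_hub[of n] odd_hub that n by simp
  have odd_hub': "gwalks n (2*Suc s + 1) (n + 1) (n + 1) = 0" if "2*Suc s + 1 < 2*n"
    using walks_first_hub[OF n, of "2*Suc s" "n + 1"] even_to_hub'[of 1] that n by simp
  have odd_to_hub': "gwalks n (2*Suc s + 1) j (n + 1) = 2 ^ Suc s"
    if "1 \<le> j" "j \<le> n" "2*Suc s + 1 + 2*j \<le> 4*n + 1" for j
  proof (cases "j = n")
    case True
    then show ?thesis
      using walks_first_end[OF n, of "2*Suc s" "n + 1"] end_to_hub' even_hub' that
      by (simp add: compositions_def)
  next
    case False
    then show ?thesis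
      using walks_first_low_two[OF n, of j "2*s + 1" "n + 1"] odd_to_hub[of "j + 1"] even_hub' that
      by (simp add: compositions_def)
  qed
  show ?thesis unfolding hub_counts_def
    using even_hub' odd_hub' odd_to_hub' even_to_hub' end_to_hub' by simp
qed

lemma hub_counts_all: "n > 1 \<Longrightarrow> hub_counts n s"
  by (induction s) (simp_all add: hub_counts_0 hub_counts_Suc)

lemma hub_returns_even: "n > 1 \<Longrightarrow> s \<le> 2*n \<Longrightarrow> gwalks n (2*s) (n + 1) (n + 1) = compositions s"
  using hub_counts_all[of n s] unfolding hub_counts_def by blast

lemma hub_returns_odd: "n > 1 \<Longrightarrow> 2*s + 1 < 2*n \<Longrightarrow> gwalks n (2*s + 1) (n + 1) (n + 1) = 0"
  using hub_counts_all[of n s] unfolding hub_counts_def by blast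

(* A walk from the hub to x_j or y_j ends with the unique path from the hub to that vertex,
   of length 2j-1 resp. 2j, after its last visit of the hub. *)
lemma walks_hub_low_high:
  assumes n: "n > 1"
  shows "1 \<le> j \<Longrightarrow> j \<le> n - 1 \<Longrightarrow>
    (\<forall>t. gwalks n t (n + 1) j = (if 2*j - 1 \<le> t then gwalks n (t + 1 - 2*j) (n + 1) (n + 1) else 0)) \<and>
    (\<forall>t. gwalks n t (n + 1) (2*n + 1 - j) = (if 2*j \<le> t then gwalks n (t - 2*j) (n + 1) (n + 1) else 0))"
proof (induction j)
  case 0
  then show ?case by simp
next
  case (Suc j)
  have low: "gwalks n t (n + 1) (Suc j) =
      (if 2*Suc j - 1 \<le> t then gwalks n (t + 1 - 2*Suc j) (n + 1) (n + 1) else 0)" for t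
  proof (cases t)
    case (Suc t')
    show ?thesis
    proof (cases "j = 0")
      case True
      then show ?thesis using walks_last_one[OF n, of "n + 1" t'] Suc n by simp
    next
      case False
      have "gwalks n (Suc t') (n + 1) (Suc j) = gwalks n t' (n + 1) (2*n + 1 - j)"
        using walks_last_low[OF n, of "Suc j" "n + 1" t'] False Suc.prems by simp
      then show ?thesis using Suc.IH Suc.prems False Suc by auto
    qed
  qed (use Suc.prems in simp)
  have high: "gwalks n t (n + 1) (2*n + 1 - Suc j) =
      (if 2*Suc j \<le> t then gwalks n (t - 2*Suc j) (n + 1) (n + 1) else 0)" for t
  proof (cases t)
    case (Suc t')
    have "gwalks n (Suc t') (n + 1) (2*n + 1 - Suc j) = gwalks n t' (n + 1) (Suc j)"
      using walks_last_high[OF n, of "2*n + 1 - Suc j" "n + 1" t'] Suc.prems by simp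
    then show ?thesis using low Suc by auto
  qed (use Suc.prems in simp)
  show ?case using low high by blast
qed

lemma walks_hub_low:
  "n > 1 \<Longrightarrow> 1 \<le> j \<Longrightarrow> j \<le> n - 1 \<Longrightarrow>
   gwalks n t (n + 1) j = (if 2*j - 1 \<le> t then gwalks n (t + 1 - 2*j) (n + 1) (n + 1) else 0)"
  using walks_hub_low_high by blast

lemma walks_hub_high:
  "n > 1 \<Longrightarrow> 1 \<le> j \<Longrightarrow> j \<le> n - 1 \<Longrightarrow>
   gwalks n t (n + 1) (2*n + 1 - j) = (if 2*j \<le> t then gwalks n (t - 2*j) (n + 1) (n + 1) else 0)"
  using walks_hub_low_high by blast

(* The high vertex n+2 = y_{n-1} is the last one before the end vertex n. *)
lemma walks_hub_last_high:
  assumes n: "n > 1"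
  shows "gwalks n t (n + 1) (n + 2) = (if 2*n - 2 \<le> t then gwalks n (t + 2 - 2*n) (n + 1) (n + 1) else 0)"
proof -
  have "2*n + 1 - (n - 1) = n + 2" "2*(n - 1) = 2*n - 2" "t - (2*n - 2) = t + 2 - 2*n" using n by auto
  then show ?thesis using walks_hub_high[OF n, of "n - 1" t] n by simp
qed

lemma walks_hub_end:
  assumes n: "n > 1"
  shows "s < 2*n \<Longrightarrow> gwalks n (2*s) (n + 1) n = geom s n \<and> gwalks n (2*s + 1) (n + 1) n = geom (Suc s) n"
proof (induction s)
  case 0
  have "gwalks n 1 (n + 1) n = 0"
    using walks_last_end[OF n, of "n + 1" 0] walks_hub_last_high[OF n, of 0] n by simp
  then show ?case using n by (simp add: geom_def)
next
  case (Suc s)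
  have step: "gwalks n (Suc t) (n + 1) n = gwalks n t (n + 1) (n + 2) + gwalks n t (n + 1) n" for t
    using walks_last_end[OF n, of "n + 1" t] n by simp
  have odd_IH: "gwalks n (2*s + 1) (n + 1) n = geom (Suc s) n" using Suc by simp
  have "gwalks n (2*s + 1) (n + 1) (n + 2) = 0"
  proof (cases "2*n - 2 \<le> 2*s + 1")
    case True
    then have "2*s + 1 + 2 - 2*n = 2*(s + 1 - n) + 1" "2*(s + 1 - n) + 1 < 2*n" using Suc.prems n by auto
    then show ?thesis using walks_hub_last_high[OF n] hub_returns_odd[OF n] True by simp
  qed (use walks_hub_last_high[OF n, of "2*s + 1"] in simp)
  then have even: "gwalks n (2*Suc s) (n + 1) n = geom (Suc s) n"
    using step[of "2*s + 1"] odd_IH by simp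
  have "gwalks n (2*s + 2) (n + 1) (n + 2) = (if n \<le> Suc (Suc s) then compositions (Suc (Suc s) - n) else 0)"
  proof (cases "n \<le> Suc (Suc s)")
    case True
    then have "2*n - 2 \<le> 2*s + 2" "2*s + 2 + 2 - 2*n = 2*(Suc (Suc s) - n)" "Suc (Suc s) - n \<le> 2*n"
      using Suc.prems n by auto
    then show ?thesis using walks_hub_last_high[OF n] hub_returns_even[OF n] True by simp
  qed (use walks_hub_last_high[OF n, of "2*s + 2"] in simp)
  then have odd: "gwalks n (2*Suc s + 1) (n + 1) n = geom (Suc (Suc s)) n"
    using step[of "2*s + 2"] even geom_step[of "Suc (Suc s)" n] by (simp add: geom_Suc_Suc)
  show ?case using even odd by blast
qed

(* Relations between closed walk counts along the path: a closed walk at x_j either leaves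
   through y_j (and corresponds to a closed walk at y_j) or through the hub. *)
lemma closed_low_step:
  assumes n: "n > 1" and j: "1 \<le> j" "j \<le> n - 1"
  shows "gwalks n (Suc m) j j = gwalks n (Suc m) (2*n + 1 - j) (2*n + 1 - j) + gwalks n m (n + 1) j"
proof -
  have "gwalks n (Suc m) (2*n + 1 - j) (2*n + 1 - j) = gwalks n m (2*n + 1 - j) j"
    using walks_last_high[OF n, of "2*n + 1 - j" "2*n + 1 - j" m] j by simp
  then show ?thesis using walks_first_low[OF n j, of m j] by simp
qed

lemma closed_high_step:
  assumes n: "n > 1" and j: "1 \<le> j" "j + 1 \<le> n - 1"
  shows "gwalks n (Suc m) (2*n + 1 - j) (2*n + 1 - j) = gwalks n (Suc m) (j + 1) (j + 1)"
proof -
  have "gwalks n (Suc m) (2*n + 1 - j) (2*n + 1 - j) = gwalks n m (j + 1) (2*n + 1 - j)"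
    using walks_first_high[OF n, of "2*n + 1 - j" m "2*n + 1 - j"] j by simp
  also have "\<dots> = gwalks n (Suc m) (j + 1) (j + 1)"
    using walks_last_low[OF n, of "j + 1" "j + 1" m] j by simp
  finally show ?thesis .
qed

lemma closed_high_last:
  assumes n: "n > 1"
  shows "gwalks n (Suc m) (n + 2) (n + 2) = gwalks n m (n + 1) n"
proof -
  have "gwalks n (Suc m) (n + 2) (n + 2) = gwalks n m n (n + 2)"
    using walks_first_high[OF n, of "n + 2" m "n + 2"] n by simp
  moreover have "gwalks n (Suc m) n n = gwalks n m n (n + 2) + gwalks n m n n"
    using walks_last_end[OF n, of n m] n by simp
  moreover have "gwalks n (Suc m) n n = gwalks n m n n + gwalks n m (n + 1) n"
    using walks_first_end[OF n] .
  ultimately show ?thesis by simp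
qed

(* Closed walks at the end vertex n: each step either loops at n or makes a round trip
   through the hub. *)
lemma closed_end:
  assumes n: "n > 1"
  shows "k \<le> 2*n \<Longrightarrow> gwalks n (2*k) n n + 1 = 2 ^ (Suc k - n) + 2 ^ (k - n)"
proof (induction k)
  case 0
  then show ?case using n by simp
next
  case (Suc k)
  have "gwalks n (2*Suc k) n n = gwalks n (2*k) n n + gwalks n (2*k) (n + 1) n + gwalks n (2*k + 1) (n + 1) n"
    using walks_first_end[OF n, of "2*k + 1" n] walks_first_end[OF n, of "2*k" n] by simp
  also have "\<dots> = gwalks n (2*k) n n + geom k n + geom (Suc k) n"
    using walks_hub_end[OF n, of k] Suc.prems by simp
  finally show ?case
    using Suc pow_plus_geom[of k n] pow_plus_geom[of "Suc k" n] by simp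
qed

lemma walks_hub_low_odd:
  assumes n: "n > 1" and k: "1 \<le> k" "k \<le> 2*n" and j: "1 \<le> j" "j \<le> n - 1"
  shows "gwalks n (2*k - 1) (n + 1) j = (if j \<le> k then compositions (k - j) else 0)"
proof -
  have "(2*j - 1 \<le> 2*k - 1) = (j \<le> k)" "j \<le> k \<Longrightarrow> 2*k - 1 + 1 - 2*j = 2*(k - j)" using j k by auto
  then show ?thesis using walks_hub_low[OF n j, of "2*k - 1"] hub_returns_even[OF n, of "k - j"] k by auto
qed

lemma closed_low_high:
  assumes n: "n > 1" and k: "1 \<le> k" "k \<le> 2*n"
  shows "1 \<le> j \<Longrightarrow> j \<le> n - 1 \<Longrightarrow>
    gwalks n (2*k) (2*n + 1 - j) (2*n + 1 - j) = geom k (Suc j) \<and> gwalks n (2*k) j j = geom k j"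
proof (induction "n - 1 - j" arbitrary: j)
  have sk: "2*k = Suc (2*k - 1)" using k by simp
  have low_from_high: "gwalks n (2*k) j j = geom k j"
    if "1 \<le> j" "j \<le> n - 1" "gwalks n (2*k) (2*n + 1 - j) (2*n + 1 - j) = geom k (Suc j)" for j
    using closed_low_step[OF n that(1,2), of "2*k - 1"] walks_hub_low_odd[OF n k that(1,2)]
      geom_step[of k j] that(3) sk by simp
  {
    case 0
    then have "2*n + 1 - j = n + 2" "j + 1 = n" by auto
    moreover have "gwalks n (2*k - 1) (n + 1) n = geom k n"
    proof -
      have "2*k - 1 = 2*(k - 1) + 1" "Suc (k - 1) = k" "k - 1 < 2*n" using k by auto
      then show ?thesis using walks_hub_end[OF n, of "k - 1"] by simp
    qed
    ultimately have "gwalks n (2*k) (2*n + 1 - j) (2*n + 1 - j) = geom k (Suc j)"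
      using closed_high_last[OF n, of "2*k - 1"] sk by simp
    then show ?case using low_from_high 0 by blast
  next
    case (Suc d)
    then have "gwalks n (2*k) (j + 1) (j + 1) = geom k (Suc j)"
      using Suc.hyps(1)[of "j + 1"] by simp
    then have "gwalks n (2*k) (2*n + 1 - j) (2*n + 1 - j) = geom k (Suc j)"
      using closed_high_step[OF n, of j "2*k - 1"] Suc sk by simp
    then show ?case using low_from_high Suc by blast
  }
qed

lemma sum_vertices_paired:
  fixes d :: "nat \<Rightarrow> 'a::comm_monoid_add"
  assumes n: "n > 1"
  shows "(\<Sum>u = 1..2*n. d u) = (\<Sum>j = 1..n - 1. d j + d (2*n + 1 - j)) + d n + d (n + 1)"
proof -
  have split: "{1..2*n} = {1..n - 1} \<union> ({n, n + 1} \<union> {n + 2..2*n})" using n by auto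
  have high: "(\<Sum>u = n + 2..2*n. d u) = (\<Sum>j = 1..n - 1. d (2*n + 1 - j))"
    by (rule sum.reindex_bij_witness[of _ "\<lambda>u. 2*n + 1 - u" "\<lambda>u. 2*n + 1 - u"]) auto
  have "(\<Sum>u = 1..2*n. d u) = (\<Sum>j = 1..n - 1. d j) + (d n + (d (n + 1) + (\<Sum>u = n + 2..2*n. d u)))"
    unfolding split by (subst sum.union_disjoint, auto)+
  then show ?thesis unfolding high sum.distrib by (simp add: ac_simps)
qed

lemma sum_shift_one:
  fixes f :: "nat \<Rightarrow> 'a::comm_monoid_add"
  shows "(\<Sum>j = 1..m. f (Suc j)) + f 1 = (\<Sum>j = 1..Suc m. f j)"
proof -
  have "(\<Sum>j = 1..Suc m. f j) = f 1 + (\<Sum>j = Suc 1..Suc m. f j)"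
    by (rule sum.atLeast_Suc_atMost) simp
  also have "(\<Sum>j = Suc 1..Suc m. f j) = (\<Sum>j = 1..m. f (Suc j))"
    by (rule sum.shift_bounds_cl_Suc_ivl)
  finally show ?thesis by (simp add: add.commute)
qed

(* c_{2k,n} = sum over the vertices of the closed walk counts:
   (2^(k-1) + ... + 2^(k-n+1)) + (2^(k-1) + ... + 2^(k-n)) from the path, 2^(k+1-n) + 2^(k-n) - 1
   at n and 2^(k-1) at the hub, which adds up to 2^(k+1) - 1. *)
theorem mainTheorem5:
  fixes n k :: nat
  assumes "n > 1" and "1 \<le> k" and "k \<le> 2 * n"
  shows "c (2 * k) n = 2 ^ (k + 1) - 1"
proof -
  have n: "n > 1" and k: "1 \<le> k" "k \<le> 2*n" using assms by auto
  let ?S = "\<lambda>m. \<Sum>j = 1..m. geom k j"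
  have pairs: "(\<Sum>j = 1..n - 1. gwalks n (2*k) j j + gwalks n (2*k) (2*n + 1 - j) (2*n + 1 - j))
      = (\<Sum>j = 1..n - 1. geom k j + geom k (Suc j))"
    using closed_low_high[OF n k] by (intro sum.cong) auto
  have hub: "gwalks n (2*k) (n + 1) (n + 1) = geom k 1"
    using hub_returns_even[OF n k(2)] k by (simp add: geom_def compositions_def)
  have "c (2*k) n = (\<Sum>u = 1..2*n. gwalks n (2*k) u u)"
    using c_eq_trace[OF n, of "2*k - 1"] k by simp
  also have "\<dots> = (\<Sum>j = 1..n - 1. gwalks n (2*k) j j + gwalks n (2*k) (2*n + 1 - j) (2*n + 1 - j))
      + gwalks n (2*k) n n + gwalks n (2*k) (n + 1) (n + 1)"
    by (rule sum_vertices_paired[OF n])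
  also have "\<dots> = ?S (n - 1) + ?S n + gwalks n (2*k) n n"
    using sum_shift_one[of "geom k" "n - 1"] n unfolding pairs hub by (simp add: sum.distrib)
  finally have "c (2*k) n + 1 = (?S (n - 1) + 2 ^ (k - (n - 1))) + (?S n + 2 ^ (k - n))"
    using closed_end[OF n k(2)] n by (simp add: Suc_diff_le)
  also have "\<dots> = 2 ^ (k + 1)" using geom_partial_sum[of k] by simp
  finally show ?thesis by simp
qed

end
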